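(* Let $k\ge 2$ and $D=\{1,\dots,k\}$. Each of the following cost functions on $D$ has a $k$-submodular discrete relaxation on the domain $\{0,1,\dots,k\}$: (1) any unary function $f:D\to\mathbb{R}$; (2) the soft version of the constraint $(x=\pi(y))$, for any permutation $\pi$ of $D$; (3) the soft version of the constraint $(x=d\lor y=d')$, for $d,d'\in D$; (4) the soft version of the constraint $(x_1=\dots=x_r)$, for any $r$. The scaling factor in all cases is $2$.
   Context: The soft version of a relation $R$ is the cost function taking value $0$ on tuples in $R$ and $1$ otherwise. A discrete relaxation of $f:D^r\to\mathbb{R}$ on $D'\supset D$ is $f':(D')^r\to\mathbb{R}$ with $\min f'=\min f$ and $f'=f$ on $D^r$. The scaling factor is the smallest rational $c$ such that $c\cdot f'$ is integral (for integer-valued $f$). With $\sqcap,\sqcup$ on $\{0,\dots,k\}$ given by $0\sqcap x=0$, $0\sqcup x=x$, $x\sqcap x=x\sqcup x=x$ and $x\sqcap y=x\sqcup y=0$ for distinct nonzero $x,y$, a function $f'$ is $k$-submodular if $f'(X)+f'(Y)\ge f'(X\sqcap Y)+f'(X\sqcup Y)$ for all $X,Y$, coordinatewise. *)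

theory Defs
  imports Main "HOL-Library.Multiset" Complex_Main
begin

definition tuples :: "nat set \<Rightarrow> nat \<Rightarrow> nat list set" where
  "tuples A r = {xs. length xs = r \<and> set xs \<subseteq> A}"

definition soft :: "(nat list \<Rightarrow> bool) \<Rightarrow> nat list \<Rightarrow> real" where
  "soft R = (\<lambda>xs. if R xs then 0 else 1)"

definition discrete_relaxation :: "nat \<Rightarrow> nat \<Rightarrow> (nat list \<Rightarrow> real) \<Rightarrow> (nat list \<Rightarrow> real) \<Rightarrow> bool" where
  "discrete_relaxation k r f f' \<longleftrightarrow>
     (\<forall>x \<in> tuples {1..k} r. f' x = f x) \<and>
     Min (f' ` tuples {0..k} r) = Min (f ` tuples {1..k} r)"

definition kmeet :: "nat \<Rightarrow> nat \<Rightarrow> nat" where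
  "kmeet x y = (if x = 0 \<or> y = 0 then 0 else if x = y then x else 0)"

definition kjoin :: "nat \<Rightarrow> nat \<Rightarrow> nat" where
  "kjoin x y = (if x = 0 then y else if y = 0 then x else if x = y then x else 0)"

definition k_submodular :: "nat \<Rightarrow> nat \<Rightarrow> (nat list \<Rightarrow> real) \<Rightarrow> bool" where
  "k_submodular k r f' \<longleftrightarrow>
     (\<forall>X \<in> tuples {0..k} r. \<forall>Y \<in> tuples {0..k} r.
        f' X + f' Y \<ge> f' (map2 kmeet X Y) + f' (map2 kjoin X Y))"

text \<open>Scaling factor (at most) 2: 2 f' is integer-valued on D'^r.\<close>
definition half_integral :: "nat \<Rightarrow> nat \<Rightarrow> (nat list \<Rightarrow> real) \<Rightarrow> bool" where
  "half_integral k r f' \<longleftrightarrow> (\<forall>x \<in> tuples {0..k} r. 2 * f' x \<in> \<int>)"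

end

theory Submission
  imports Defs
begin

text \<open>Each relaxation charges the new label 0 about half a unit. For a unary f the value at 0
  is the least average (f a + f b) / 2 over distinct labels a, b, which is exactly what
  k-submodularity demands of the pair a, b (whose meet and join are both 0). The equality
  constraint is relaxed to 1 on tuples carrying two distinct labels of D, to 1/2 on tuples carrying
  a single label of D together with 0, and to 0 otherwise; it is k-submodular because every nonzero
  label of X \<sqinter> Y occurs in both X and Y, and every nonzero label of X \<squnion> Y occurs in X or Y,
  and in Y alone when Y avoids 0. The constraint x = \<pi> y is the equality relaxation applied to
  (x, \<pi> y) with \<pi> extended by 0 \<mapsto> 0, an extension that commutes with \<sqinter> and \<squnion>
  because \<pi> is injective; the disjunction is relaxed by an explicit table.\<close>

lemma finite_tuples: "finite A \<Longrightarrow> finite (tuples A r)"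
  unfolding tuples_def using finite_lists_length_eq[of A r] by (simp add: conj_commute)

lemma tuples_1_iff: "xs \<in> tuples A 1 \<longleftrightarrow> (\<exists>x. xs = [x] \<and> x \<in> A)"
  unfolding tuples_def by (cases xs) auto

lemma tuples_2_iff: "xs \<in> tuples A 2 \<longleftrightarrow> (\<exists>x y. xs = [x, y] \<and> x \<in> A \<and> y \<in> A)"
  unfolding tuples_def by (cases xs; cases "tl xs") (auto simp: numeral_2_eq_2)

lemma tuples_mono: "A \<subseteq> B \<Longrightarrow> tuples A r \<subseteq> tuples B r"
  unfolding tuples_def by auto

lemma discrete_relaxationI:
  assumes nonempty: "tuples {1..k} r \<noteq> {}"
    and agree: "\<forall>x \<in> tuples {1..k} r. f' x = f x"
    and above: "\<And>x. x \<in> tuples {0..k} r \<Longrightarrow> \<exists>y \<in> tuples {1..k} r. f y \<le> f' x"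
  shows "discrete_relaxation k r f f'"
proof -
  let ?D = "tuples {1..k} r" and ?D' = "tuples {0..k} r"
  have fin: "finite ?D" "finite ?D'" by (simp_all add: finite_tuples)
  have sub: "?D \<subseteq> ?D'" by (rule tuples_mono) auto
  have "Min (f ` ?D) \<in> f ` ?D" using fin nonempty by (intro Min_in) auto
  then obtain y0 where y0: "y0 \<in> ?D" "Min (f ` ?D) = f y0" by auto
  have "Min (f' ` ?D') \<in> f' ` ?D'" using fin nonempty sub by (intro Min_in) auto
  then obtain x0 where x0: "x0 \<in> ?D'" "Min (f' ` ?D') = f' x0" by auto
  obtain y where y: "y \<in> ?D" "f y \<le> f' x0" using above[OF x0(1)] by blast
  have "Min (f' ` ?D') \<le> f' y0" using fin y0 sub by (intro Min_le) auto
  moreover have "Min (f ` ?D) \<le> f y" using fin y by (intro Min_le) auto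
  ultimately show ?thesis
    unfolding discrete_relaxation_def using agree x0 y0 y by auto
qed

lemma discrete_relaxation_soft:
  assumes "y \<in> tuples {1..k} r" "R y"
    and "\<forall>x \<in> tuples {1..k} r. f' x = soft R x"
    and "\<And>x. x \<in> tuples {0..k} r \<Longrightarrow> f' x \<ge> 0"
  shows "discrete_relaxation k r (soft R) f'"
  using assms by (intro discrete_relaxationI) (auto simp: soft_def)

lemma k_submodular_binaryI:
  assumes "\<And>x1 x2 y1 y2. \<lbrakk>x1 \<in> {0..k}; x2 \<in> {0..k}; y1 \<in> {0..k}; y2 \<in> {0..k}\<rbrakk> \<Longrightarrow>
    g [kmeet x1 y1, kmeet x2 y2] + g [kjoin x1 y1, kjoin x2 y2] \<le> g [x1, x2] + g [y1, y2]"
  shows "k_submodular k 2 g"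
  unfolding k_submodular_def
proof (intro ballI)
  fix X Y assume "X \<in> tuples {0..k} 2" "Y \<in> tuples {0..k} 2"
  then obtain x1 x2 y1 y2 where "X = [x1, x2]" "Y = [y1, y2]"
    "x1 \<in> {0..k}" "x2 \<in> {0..k}" "y1 \<in> {0..k}" "y2 \<in> {0..k}"
    unfolding tuples_2_iff by blast
  then show "g (map2 kmeet X Y) + g (map2 kjoin X Y) \<le> g X + g Y" using assms by simp
qed

definition unary_relax :: "nat \<Rightarrow> (nat list \<Rightarrow> real) \<Rightarrow> nat list \<Rightarrow> real" where
  "unary_relax k f xs =
     (if xs = [0] then Min ((\<lambda>(a, b). (f [a] + f [b]) / 2) ` ({1..k} \<times> {1..k} - Id))
      else f xs)"

lemma unary_relax_zero:
  "unary_relax k f [0] = Min ((\<lambda>(a, b). (f [a] + f [b]) / 2) ` ({1..k} \<times> {1..k} - Id))"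
  by (simp add: unary_relax_def)

lemma unary_relax_zero_le:
  assumes "a \<in> {1..k}" "b \<in> {1..k}" "a \<noteq> b"
  shows "unary_relax k f [0] \<le> (f [a] + f [b]) / 2"
proof -
  let ?g = "\<lambda>(a, b). (f [a] + f [b]) / 2"
  have "(a, b) \<in> {1..k} \<times> {1..k} - Id" using assms by simp
  then have "?g (a, b) \<in> ?g ` ({1..k} \<times> {1..k} - Id)" by (rule imageI)
  then have "Min (?g ` ({1..k} \<times> {1..k} - Id)) \<le> ?g (a, b)" by (intro Min_le) simp_all
  then show ?thesis by (simp add: unary_relax_zero)
qed

lemma unary_relax_zeroE:
  assumes "k \<ge> 2"
  obtains a b where "a \<in> {1..k}" "b \<in> {1..k}" "unary_relax k f [0] = (f [a] + f [b]) / 2"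
proof -
  let ?g = "\<lambda>(a, b). (f [a] + f [b]) / 2" and ?P = "{1..k} \<times> {1..k} - Id"
  have "(1, 2) \<in> ?P" using assms by simp
  then have "unary_relax k f [0] \<in> ?g ` ?P"
    unfolding unary_relax_zero by (intro Min_in) blast+
  then obtain p where p: "p \<in> ?P" "unary_relax k f [0] = ?g p" by (rule imageE)
  obtain a b where "p = (a, b)" by (cases p)
  with p show ?thesis by (intro that[of a b]) auto
qed

lemma unary_relaxation:
  assumes "k \<ge> 2"
  shows "discrete_relaxation k 1 f (unary_relax k f) \<and> k_submodular k 1 (unary_relax k f)
    \<and> ((\<forall>x \<in> tuples {1..k} 1. f x \<in> \<int>) \<longrightarrow> half_integral k 1 (unary_relax k f))"
proof (intro conjI impI)
  obtain a b where ab: "a \<in> {1..k}" "b \<in> {1..k}" "unary_relax k f [0] = (f [a] + f [b]) / 2"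
    using unary_relax_zeroE[OF assms] .
  have "{0..k} = insert 0 {1..k}" by auto
  then have tuples_0: "tuples {0..k} 1 = insert [0] (tuples {1..k} 1)"
    unfolding set_eq_iff insert_iff tuples_1_iff by auto
  have agree: "\<forall>x \<in> tuples {1..k} 1. unary_relax k f x = f x"
    by (auto simp: tuples_def unary_relax_def)
  show "discrete_relaxation k 1 f (unary_relax k f)"
  proof (rule discrete_relaxationI[OF _ agree])
    have "[1] \<in> tuples {1..k} 1" using assms by (simp add: tuples_def)
    then show "tuples {1..k} 1 \<noteq> {}" by blast
    fix x assume "x \<in> tuples {0..k} 1"
    then consider "x = [0]" | "x \<in> tuples {1..k} 1" unfolding tuples_0 by blast
    then show "\<exists>y \<in> tuples {1..k} 1. f y \<le> unary_relax k f x"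
    proof cases
      case 1
      have "[a] \<in> tuples {1..k} 1" "[b] \<in> tuples {1..k} 1" using ab by (auto simp: tuples_def)
      then show ?thesis using 1 ab(3) by (cases "f [a] \<le> f [b]") force+
    qed (use agree in auto)
  qed
  show "k_submodular k 1 (unary_relax k f)"
    unfolding k_submodular_def
  proof (intro ballI)
    fix X Y assume "X \<in> tuples {0..k} 1" "Y \<in> tuples {0..k} 1"
    then obtain x y where xy: "X = [x]" "Y = [y]" "x \<le> k" "y \<le> k" unfolding tuples_1_iff by auto
    show "unary_relax k f (map2 kmeet X Y) + unary_relax k f (map2 kjoin X Y)
      \<le> unary_relax k f X + unary_relax k f Y"
    proof (cases "x = y \<or> x = 0 \<or> y = 0")
      case True
      then show ?thesis using xy by (auto simp: kmeet_def kjoin_def)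
    next
      case False
      then show ?thesis
        using xy unary_relax_zero_le[of x k y f] by (simp add: kmeet_def kjoin_def unary_relax_def)
    qed
  qed
  assume int: "\<forall>x \<in> tuples {1..k} 1. f x \<in> \<int>"
  then have "f [a] + f [b] \<in> \<int>" using ab by (auto simp: tuples_def)
  then have "2 * unary_relax k f [0] \<in> \<int>" using ab(3) by (simp add: mult.commute)
  then show "half_integral k 1 (unary_relax k f)"
    unfolding half_integral_def tuples_0 using int agree by auto
qed

lemma set_map2_subset:
  "(\<And>x y. x \<in> set X \<Longrightarrow> y \<in> set Y \<Longrightarrow> g x y \<in> B) \<Longrightarrow> set (map2 g X Y) \<subseteq> B"
  by (auto dest: set_zip_leftD set_zip_rightD)

lemma map2_kmeet_commute: "map2 kmeet X Y = map2 kmeet Y X"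
proof (induction X arbitrary: Y)
  case (Cons a X)
  then show ?case by (cases Y) (auto simp: kmeet_def)
qed simp

lemma map2_kjoin_commute: "map2 kjoin X Y = map2 kjoin Y X"
proof (induction X arbitrary: Y)
  case (Cons a X)
  then show ?case by (cases Y) (auto simp: kjoin_def)
qed simp

lemma set_map2_kmeet: "set (map2 kmeet X Y) - {0} \<subseteq> set X \<inter> set Y"
proof -
  have "set (map2 kmeet X Y) \<subseteq> insert 0 (set X \<inter> set Y)"
    by (rule set_map2_subset) (auto simp: kmeet_def)
  then show ?thesis by auto
qed

lemma set_map2_kjoin: "set (map2 kjoin X Y) - {0} \<subseteq> set X \<union> set Y"
proof -
  have "set (map2 kjoin X Y) \<subseteq> insert 0 (set X \<union> set Y)"
    by (rule set_map2_subset) (auto simp: kjoin_def)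
  then show ?thesis by auto
qed

lemma set_map2_kjoin_zero_free: "0 \<notin> set Y \<Longrightarrow> set (map2 kjoin X Y) - {0} \<subseteq> set Y"
proof -
  assume "0 \<notin> set Y"
  then have "set (map2 kjoin X Y) \<subseteq> insert 0 (set Y)"
    by (intro set_map2_subset) (auto simp: kjoin_def)
  then show ?thesis by auto
qed

definition eq_relax :: "nat list \<Rightarrow> real" where
  "eq_relax xs =
     (if card (set xs - {0}) \<ge> 2 then 1
      else if set xs - {0} \<noteq> {} \<and> 0 \<in> set xs then 1/2 else 0)"

lemma eq_relax_nonneg: "eq_relax xs \<ge> 0"
  by (simp add: eq_relax_def)

lemma eq_relax_le_1: "eq_relax xs \<le> 1"
  by (simp add: eq_relax_def)

lemma eq_relax_half_integral: "2 * eq_relax xs \<in> \<int>"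
  by (simp add: eq_relax_def)

lemma eq_relax_le_half: "set xs - {0} \<subseteq> {a} \<Longrightarrow> eq_relax xs \<le> 1/2"
  using card_mono[of "{a}" "set xs - {0}"] by (auto simp: eq_relax_def)

lemma eq_relax_const:
  assumes "set xs \<subseteq> {c}"
  shows "eq_relax xs = 0"
proof -
  have "card (set xs - {0}) \<le> card {c}" using assms by (intro card_mono) auto
  then show ?thesis using assms by (auto simp: eq_relax_def)
qed

lemma eq_relax_all_zero: "set xs - {0} = {} \<Longrightarrow> eq_relax xs = 0"
  by (rule eq_relax_const[of _ 0]) auto

lemma eq_relax_zero_free:
  assumes "0 \<notin> set xs" "length xs = r"
  shows "eq_relax xs = soft (\<lambda>xs. \<forall>i<r. \<forall>j<r. xs ! i = xs ! j) xs"
proof -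
  have "(\<forall>i<r. \<forall>j<r. xs ! i = xs ! j) \<longleftrightarrow> (\<forall>a\<in>set xs. \<forall>b\<in>set xs. a = b)"
    using assms(2) by (metis in_set_conv_nth nth_mem)
  also have "\<dots> \<longleftrightarrow> \<not> card (set xs) \<ge> 2"
    using card_le_Suc0_iff_eq[of "set xs"] by auto
  finally show ?thesis
    using assms(1) by (simp add: eq_relax_def soft_def insert_absorb)
qed

lemma eq_relax_cases:
  obtains "eq_relax xs = 1"
  | c where "eq_relax xs = 0" "set xs \<subseteq> {c}"
  | a where "eq_relax xs = 1/2" "set xs - {0} = {a}"
proof (cases "card (set xs - {0}) \<ge> 2")
  case True
  then show ?thesis using that(1) by (simp add: eq_relax_def)
next
  case False
  then have "card (set xs - {0}) = 0 \<or> card (set xs - {0}) = 1" by linarith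
  then consider "set xs \<subseteq> {0}" | a where "set xs - {0} = {a}"
    by (auto simp: card_1_singleton_iff)
  then show ?thesis
  proof cases
    case 1
    then show ?thesis using that(2) eq_relax_const by blast
  next
    case (2 a)
    show ?thesis
    proof (cases "0 \<in> set xs")
      case True
      then show ?thesis using 2 that(3) False by (simp add: eq_relax_def)
    next
      case False
      then have "set xs \<subseteq> {a}" using 2 by blast
      then show ?thesis using that(2) eq_relax_const by blast
    qed
  qed
qed

lemma eq_relax_kmeet_kjoin_top:
  assumes "eq_relax X = 1"
  shows "eq_relax (map2 kmeet X Y) + eq_relax (map2 kjoin X Y) \<le> eq_relax X + eq_relax Y"
proof -
  let ?M = "map2 kmeet X Y" and ?J = "map2 kjoin X Y"
  show ?thesis
  proof (cases rule: eq_relax_cases[of Y])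
    case 1
    then show ?thesis using assms eq_relax_le_1[of ?M] eq_relax_le_1[of ?J] by simp
  next
    case (2 c)
    show ?thesis
    proof (cases "c = 0")
      case True
      then have "eq_relax ?M = 0"
        using set_map2_kmeet[of X Y] 2 by (intro eq_relax_all_zero) blast
      then show ?thesis using assms 2 eq_relax_le_1[of ?J] by simp
    next
      case False
      then have "set ?J - {0} \<subseteq> {c}" using set_map2_kjoin_zero_free[of Y X] 2 by blast
      then have "eq_relax ?J \<le> 1/2" by (rule eq_relax_le_half)
      moreover have "eq_relax ?M \<le> 1/2"
        using set_map2_kmeet[of X Y] 2 by (intro eq_relax_le_half) blast
      ultimately show ?thesis using assms 2 by simp
    qed
  next
    case (3 b)
    then have "eq_relax ?M \<le> 1/2" using set_map2_kmeet[of X Y] by (intro eq_relax_le_half) blast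
    then show ?thesis using assms 3 eq_relax_le_1[of ?J] by simp
  qed
qed

lemma eq_relax_kmeet_kjoin_half_const:
  assumes X: "set X - {0} \<subseteq> {a}" and Y: "set Y \<subseteq> {c}"
  shows "eq_relax (map2 kmeet X Y) + eq_relax (map2 kjoin X Y) \<le> 1/2"
proof -
  let ?M = "map2 kmeet X Y" and ?J = "map2 kjoin X Y"
  consider "c = 0" | "c = a" "c \<noteq> 0" | "c \<noteq> a" "c \<noteq> 0" by blast
  then show ?thesis
  proof cases
    case 1
    then have "set ?M - {0} = {}" using set_map2_kmeet[of X Y] Y by blast
    then have "eq_relax ?M = 0" by (rule eq_relax_all_zero)
    moreover have "set ?J - {0} \<subseteq> {a}" using set_map2_kjoin[of X Y] X Y 1 by blast
    then have "eq_relax ?J \<le> 1/2" by (rule eq_relax_le_half)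
    ultimately show ?thesis by simp
  next
    case 2
    then have "set ?J \<subseteq> {a}" using X Y by (intro set_map2_subset) (auto simp: kjoin_def)
    then have "eq_relax ?J = 0" by (rule eq_relax_const)
    moreover have "set ?M - {0} \<subseteq> {a}" using set_map2_kmeet[of X Y] X by blast
    then have "eq_relax ?M \<le> 1/2" by (rule eq_relax_le_half)
    ultimately show ?thesis by simp
  next
    case 3
    then have "set ?M - {0} = {}" using set_map2_kmeet[of X Y] X Y by blast
    then have "eq_relax ?M = 0" by (rule eq_relax_all_zero)
    moreover have "set ?J - {0} \<subseteq> {c}" using set_map2_kjoin_zero_free[of Y X] Y 3 by blast
    then have "eq_relax ?J \<le> 1/2" by (rule eq_relax_le_half)
    ultimately show ?thesis by simp
  qed
qed

lemma eq_relax_kmeet_kjoin_const: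
  assumes "set X \<subseteq> {c}" "set Y \<subseteq> {e}"
  shows "eq_relax (map2 kmeet X Y) + eq_relax (map2 kjoin X Y) = 0"
proof -
  have "set (map2 kmeet X Y) \<subseteq> {kmeet c e}"
    by (rule set_map2_subset) (use assms in auto)
  moreover have "set (map2 kjoin X Y) \<subseteq> {kjoin c e}"
    by (rule set_map2_subset) (use assms in auto)
  ultimately show ?thesis using eq_relax_const by (metis add.right_neutral)
qed

lemma eq_relax_kmeet_kjoin_half_half:
  assumes X: "set X - {0} \<subseteq> {a}" and Y: "set Y - {0} \<subseteq> {b}"
  shows "eq_relax (map2 kmeet X Y) + eq_relax (map2 kjoin X Y) \<le> 1"
proof (cases "a = b")
  case True
  then have "set (map2 kmeet X Y) - {0} \<subseteq> {a}" "set (map2 kjoin X Y) - {0} \<subseteq> {a}"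
    using set_map2_kmeet[of X Y] set_map2_kjoin[of X Y] X Y by blast+
  then show ?thesis
    using eq_relax_le_half[of "map2 kmeet X Y" a] eq_relax_le_half[of "map2 kjoin X Y" a] by linarith
next
  case False
  then have "set (map2 kmeet X Y) - {0} = {}" using set_map2_kmeet[of X Y] X Y by blast
  then show ?thesis using eq_relax_all_zero eq_relax_le_1[of "map2 kjoin X Y"] by simp
qed

lemma eq_relax_kmeet_kjoin_ordered:
  assumes le: "eq_relax Y \<le> eq_relax X"
  shows "eq_relax (map2 kmeet X Y) + eq_relax (map2 kjoin X Y) \<le> eq_relax X + eq_relax Y"
proof (cases rule: eq_relax_cases[of X])
  case 1
  then show ?thesis by (rule eq_relax_kmeet_kjoin_top)
next
  case (2 c)
  have "eq_relax Y = 0" using le 2 eq_relax_nonneg[of Y] by linarith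
  then obtain e where "set Y \<subseteq> {e}" by (cases rule: eq_relax_cases[of Y]) simp_all
  then show ?thesis using 2 eq_relax_kmeet_kjoin_const[of X c Y e] \<open>eq_relax Y = 0\<close> by linarith
next
  case X: (3 a)
  show ?thesis
  proof (cases rule: eq_relax_cases[of Y])
    case 1
    then show ?thesis using le X(1) by linarith
  next
    case (2 e)
    then show ?thesis using X eq_relax_kmeet_kjoin_half_const[of X a Y e] by simp
  next
    case (3 b)
    then show ?thesis using X eq_relax_kmeet_kjoin_half_half[of X a Y b] by simp
  qed
qed

lemma eq_relax_kmeet_kjoin:
  "eq_relax (map2 kmeet X Y) + eq_relax (map2 kjoin X Y) \<le> eq_relax X + eq_relax Y"
proof (cases "eq_relax Y \<le> eq_relax X")
  case True
  then show ?thesis by (rule eq_relax_kmeet_kjoin_ordered)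
next
  case False
  then show ?thesis
    using eq_relax_kmeet_kjoin_ordered[where X = Y and Y = X]
    unfolding map2_kmeet_commute[of X Y] map2_kjoin_commute[of X Y] by linarith
qed

definition lift0 :: "(nat \<Rightarrow> nat) \<Rightarrow> nat \<Rightarrow> nat" where
  "lift0 \<pi> y = (if y = 0 then 0 else \<pi> y)"

lemma lift0_kmeet:
  assumes "inj_on \<pi> A" "0 \<notin> \<pi> ` A" "a \<in> insert 0 A" "b \<in> insert 0 A"
  shows "lift0 \<pi> (kmeet a b) = kmeet (lift0 \<pi> a) (lift0 \<pi> b)"
  using assms by (auto simp: lift0_def kmeet_def inj_on_eq_iff)

lemma lift0_kjoin:
  assumes "inj_on \<pi> A" "0 \<notin> \<pi> ` A" "a \<in> insert 0 A" "b \<in> insert 0 A"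
  shows "lift0 \<pi> (kjoin a b) = kjoin (lift0 \<pi> a) (lift0 \<pi> b)"
  using assms by (auto simp: lift0_def kjoin_def inj_on_eq_iff)

lemma soft_equality_relaxation:
  assumes "k \<ge> 1"
  shows "discrete_relaxation k r (soft (\<lambda>xs. \<forall>i<r. \<forall>j<r. xs ! i = xs ! j)) eq_relax
    \<and> k_submodular k r eq_relax \<and> half_integral k r eq_relax"
proof (intro conjI)
  have "replicate r 1 \<in> tuples {1..k} r" using assms by (auto simp: tuples_def)
  moreover have "\<forall>x \<in> tuples {1..k} r. eq_relax x = soft (\<lambda>xs. \<forall>i<r. \<forall>j<r. xs ! i = xs ! j) x"
    by (auto simp: tuples_def intro!: eq_relax_zero_free)
  ultimately show "discrete_relaxation k r (soft (\<lambda>xs. \<forall>i<r. \<forall>j<r. xs ! i = xs ! j)) eq_relax"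
    by (intro discrete_relaxation_soft) (auto simp: eq_relax_nonneg)
  show "k_submodular k r eq_relax"
    unfolding k_submodular_def by (intro ballI eq_relax_kmeet_kjoin)
  show "half_integral k r eq_relax"
    unfolding half_integral_def by (intro ballI eq_relax_half_integral)
qed

lemma soft_permutation_relaxation:
  assumes "k \<ge> 1" "bij_betw \<pi> {1..k} {1..k}"
  defines "f' \<equiv> \<lambda>xs. eq_relax [xs ! 0, lift0 \<pi> (xs ! 1)]"
  shows "discrete_relaxation k 2 (soft (\<lambda>xs. xs ! 0 = \<pi> (xs ! 1))) f'
    \<and> k_submodular k 2 f' \<and> half_integral k 2 f'"
proof (intro conjI)
  have inj: "inj_on \<pi> {1..k}" and img: "\<pi> ` {1..k} = {1..k}"
    using assms(2) by (simp_all add: bij_betw_def)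
  have "[\<pi> 1, 1] \<in> tuples {1..k} 2" using assms(1) img by (auto simp: tuples_def)
  moreover have "\<forall>x \<in> tuples {1..k} 2. f' x = soft (\<lambda>xs. xs ! 0 = \<pi> (xs ! 1)) x"
  proof
    fix x assume "x \<in> tuples {1..k} 2"
    then obtain a b where "x = [a, b]" "a \<in> {1..k}" "b \<in> {1..k}" unfolding tuples_2_iff by blast
    moreover have "\<pi> b \<in> {1..k}" using \<open>b \<in> {1..k}\<close> img by blast
    ultimately show "f' x = soft (\<lambda>xs. xs ! 0 = \<pi> (xs ! 1)) x"
      using eq_relax_zero_free[of "[a, \<pi> b]" 2]
      by (auto simp: f'_def lift0_def soft_def less_2_cases_iff)
  qed
  ultimately show "discrete_relaxation k 2 (soft (\<lambda>xs. xs ! 0 = \<pi> (xs ! 1))) f'"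
    by (intro discrete_relaxation_soft) (auto simp: f'_def eq_relax_nonneg)
  show "k_submodular k 2 f'"
  proof (rule k_submodular_binaryI)
    fix x1 x2 y1 y2 :: nat assume "x2 \<in> {0..k}" "y2 \<in> {0..k}"
    then have "x2 \<in> insert 0 {1..k}" "y2 \<in> insert 0 {1..k}" by auto
    moreover have "0 \<notin> \<pi> ` {1..k}" using img by auto
    ultimately show "f' [kmeet x1 y1, kmeet x2 y2] + f' [kjoin x1 y1, kjoin x2 y2] \<le> f' [x1, x2] + f' [y1, y2]"
      using eq_relax_kmeet_kjoin[of "[x1, lift0 \<pi> x2]" "[y1, lift0 \<pi> y2]"]
      by (simp add: f'_def lift0_kmeet[OF inj] lift0_kjoin[OF inj])
  qed
  show "half_integral k 2 f'"
    unfolding half_integral_def f'_def by (intro ballI eq_relax_half_integral)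
qed

definition or_relax :: "nat \<Rightarrow> nat \<Rightarrow> nat list \<Rightarrow> real" where
  "or_relax d d' xs =
     (if xs ! 0 = d \<or> xs ! 1 = d' \<or> (xs ! 0 = 0 \<and> xs ! 1 = 0) then 0
      else if xs ! 0 = 0 \<or> xs ! 1 = 0 then 1/2 else 1)"

lemma or_relax_kmeet_kjoin:
  assumes "d \<noteq> 0" "d' \<noteq> 0"
  shows "or_relax d d' [kmeet x1 y1, kmeet x2 y2] + or_relax d d' [kjoin x1 y1, kjoin x2 y2]
    \<le> or_relax d d' [x1, x2] + or_relax d d' [y1, y2]"
  unfolding kmeet_def kjoin_def using assms
  by (cases "x1 = 0"; cases "y1 = 0"; cases "x2 = 0"; cases "y2 = 0"; cases "x1 = y1"; cases "x2 = y2")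
    (auto simp: or_relax_def)

lemma soft_or_relaxation:
  assumes "d \<in> {1..k}" "d' \<in> {1..k}"
  shows "discrete_relaxation k 2 (soft (\<lambda>xs. xs ! 0 = d \<or> xs ! 1 = d')) (or_relax d d')
    \<and> k_submodular k 2 (or_relax d d') \<and> half_integral k 2 (or_relax d d')"
proof (intro conjI)
  have "[d, d'] \<in> tuples {1..k} 2" using assms by (auto simp: tuples_def)
  moreover have "\<forall>x \<in> tuples {1..k} 2. or_relax d d' x = soft (\<lambda>xs. xs ! 0 = d \<or> xs ! 1 = d') x"
    by (auto simp: tuples_2_iff or_relax_def soft_def)
  ultimately show "discrete_relaxation k 2 (soft (\<lambda>xs. xs ! 0 = d \<or> xs ! 1 = d')) (or_relax d d')"
    by (intro discrete_relaxation_soft) (auto simp: or_relax_def)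
  show "k_submodular k 2 (or_relax d d')"
    using assms by (intro k_submodular_binaryI or_relax_kmeet_kjoin) auto
  show "half_integral k 2 (or_relax d d')"
    by (simp add: half_integral_def or_relax_def)
qed

theorem lemma3:
  fixes k :: nat
  assumes "k \<ge> 2"
  shows
   "(\<forall>f :: nat list \<Rightarrow> real. \<exists>f'. discrete_relaxation k 1 f f' \<and> k_submodular k 1 f' \<and>
        ((\<forall>x \<in> tuples {1..k} 1. f x \<in> \<int>) \<longrightarrow> half_integral k 1 f'))
  \<and> (\<forall>\<pi> :: nat \<Rightarrow> nat. bij_betw \<pi> {1..k} {1..k} \<longrightarrow>
        (\<exists>f'. let f = soft (\<lambda>xs. xs ! 0 = \<pi> (xs ! 1)) in
           discrete_relaxation k 2 f f' \<and> k_submodular k 2 f' \<and> half_integral k 2 f'))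
  \<and> (\<forall>d \<in> {1..k}. \<forall>d' \<in> {1..k}.
        (\<exists>f'. let f = soft (\<lambda>xs. xs ! 0 = d \<or> xs ! 1 = d') in
           discrete_relaxation k 2 f f' \<and> k_submodular k 2 f' \<and> half_integral k 2 f'))
  \<and> (\<forall>r :: nat.
        (\<exists>f'. let f = soft (\<lambda>xs. \<forall>i<r. \<forall>j<r. xs ! i = xs ! j) in
           discrete_relaxation k r f f' \<and> k_submodular k r f' \<and> half_integral k r f'))"
proof -
  have "k \<ge> 1" using assms by simp
  then show ?thesis
    unfolding Let_def
    using unary_relaxation[OF assms] soft_permutation_relaxation soft_or_relaxation
      soft_equality_relaxation
    by blast
qed

end
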